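(* For every finite graph $G$, \[\mathrm{VCdim}(G)\le 8\,\mathrm{fw}_1(G)\quad\text{and}\quad \mathrm{2VCdim}(G)\le 8\,\mathrm{fw}_2(G)+2.\]
   Context: Graphs are finite, simple, undirected; $N(v)$ is the (open) neighbourhood of $v$. $\mathrm{VCdim}(G)$ is the largest size of a set $X\subseteq V(G)$ with $\{N(v)\cap X: v\in V(G)\}=2^X$. $\mathrm{2VCdim}(G)$ is the largest size of a set $X\subseteq V(G)$ such that for every two distinct $a,b\in X$ there is $c\in V(G)$ with $N(c)\cap X=\{a,b\}$. A $k$-flip of $G$ is a graph obtained by choosing a partition $\mathcal P$ of $V(G)$ with at most $k$ parts and, for some pairs $A,B$ of (possibly equal) parts, inverting the adjacency of every pair of distinct vertices $x\in A$, $y\in B$. Flipper game of radius $r$ and width $k$: $G_0=G$, runner chooses $v_0$; in round $i\ge1$ the flipper announces a $k$-flip $G_i$ of $G$, then the runner moves from $v_{i-1}$ to $v_i$ along a path of length at most $r$ in $G_{i-1}$; the flipper wins if $v_i$ is isolated in $G_i$. $\mathrm{fw}_r(G)$ is the least $k$ for which the flipper has a winning strategy. *)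

theory Defs
  imports Main
begin

definition finite_graph :: "'a set \<Rightarrow> ('a \<Rightarrow> 'a \<Rightarrow> bool) \<Rightarrow> bool" where
  "finite_graph V E \<longleftrightarrow> finite V \<and>
     (\<forall>x y. E x y \<longrightarrow> x \<in> V \<and> y \<in> V \<and> x \<noteq> y) \<and>
     (\<forall>x y. E x y \<longrightarrow> E y x)"

definition nbhd :: "'a set \<Rightarrow> ('a \<Rightarrow> 'a \<Rightarrow> bool) \<Rightarrow> 'a \<Rightarrow> 'a set" where
  "nbhd V E v = {u \<in> V. E v u}"

definition shattered :: "'a set \<Rightarrow> ('a \<Rightarrow> 'a \<Rightarrow> bool) \<Rightarrow> 'a set \<Rightarrow> bool" where
  "shattered V E X \<longleftrightarrow> X \<subseteq> V \<and> {nbhd V E v \<inter> X | v. v \<in> V} = Pow X"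

text \<open>Largest size of a shattered set (Sup of the empty set of naturals is 0).\<close>
definition VCdim :: "'a set \<Rightarrow> ('a \<Rightarrow> 'a \<Rightarrow> bool) \<Rightarrow> nat" where
  "VCdim V E = Sup {card X | X. shattered V E X}"

definition two_shattered :: "'a set \<Rightarrow> ('a \<Rightarrow> 'a \<Rightarrow> bool) \<Rightarrow> 'a set \<Rightarrow> bool" where
  "two_shattered V E X \<longleftrightarrow> X \<subseteq> V \<and>
     (\<forall>a\<in>X. \<forall>b\<in>X. a \<noteq> b \<longrightarrow> (\<exists>c\<in>V. nbhd V E c \<inter> X = {a, b}))"

definition twoVCdim :: "'a set \<Rightarrow> ('a \<Rightarrow> 'a \<Rightarrow> bool) \<Rightarrow> nat" where
  "twoVCdim V E = Sup {card X | X. two_shattered V E X}"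

text \<open>Flip of (V,E) w.r.t. a labelling p of the vertices (the parts of the partition
are the label classes) and a symmetric relation F on labels (the chosen pairs of parts).\<close>
definition flip_graph :: "'a set \<Rightarrow> ('a \<Rightarrow> 'a \<Rightarrow> bool) \<Rightarrow> ('a \<Rightarrow> nat) \<Rightarrow> (nat \<Rightarrow> nat \<Rightarrow> bool)
    \<Rightarrow> 'a \<Rightarrow> 'a \<Rightarrow> bool" where
  "flip_graph V E p F x y \<longleftrightarrow> x \<in> V \<and> y \<in> V \<and> x \<noteq> y \<and> (E x y \<noteq> F (p x) (p y))"

definition is_k_flip :: "'a set \<Rightarrow> ('a \<Rightarrow> 'a \<Rightarrow> bool) \<Rightarrow> nat \<Rightarrow> ('a \<Rightarrow> 'a \<Rightarrow> bool) \<Rightarrow> bool" where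
  "is_k_flip V E k H \<longleftrightarrow> (\<exists>p F. (\<forall>v\<in>V. p v < k) \<and> (\<forall>i j. F i j \<longrightarrow> F j i) \<and>
      H = flip_graph V E p F)"

definition within_dist :: "('a \<Rightarrow> 'a \<Rightarrow> bool) \<Rightarrow> nat \<Rightarrow> 'a \<Rightarrow> 'a \<Rightarrow> bool" where
  "within_dist H r v w \<longleftrightarrow> (\<exists>m f. m \<le> r \<and> f 0 = v \<and> f m = w \<and> (\<forall>j<m. H (f j) (f (Suc j))))"

definition isolated :: "('a \<Rightarrow> 'a \<Rightarrow> bool) \<Rightarrow> 'a \<Rightarrow> bool" where
  "isolated H v \<longleftrightarrow> (\<forall>u. \<not> H v u)"

text \<open>Winning region of the flipper in the flipper game of radius r and width k on (V,E):
the position (H, v) means that the previous graph G_(i-1) is H and the runner sits at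
v = v_(i-1). This is the least fixed point
(attractor), i.e. the set of positions from which the flipper has a winning strategy.\<close>
inductive flipper_wins_from :: "'a set \<Rightarrow> ('a \<Rightarrow> 'a \<Rightarrow> bool) \<Rightarrow> nat \<Rightarrow> nat
    \<Rightarrow> ('a \<Rightarrow> 'a \<Rightarrow> bool) \<Rightarrow> 'a \<Rightarrow> bool"
  for V E r k where
  step: "is_k_flip V E k H' \<Longrightarrow>
     (\<forall>w. within_dist H r v w \<longrightarrow> isolated H' w \<or> flipper_wins_from V E r k H' w) \<Longrightarrow>
     flipper_wins_from V E r k H v"

definition flipper_wins :: "'a set \<Rightarrow> ('a \<Rightarrow> 'a \<Rightarrow> bool) \<Rightarrow> nat \<Rightarrow> nat \<Rightarrow> bool" where
  "flipper_wins V E r k \<longleftrightarrow> (\<forall>v0\<in>V. flipper_wins_from V E r k E v0)"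

definition fw :: "nat \<Rightarrow> 'a set \<Rightarrow> ('a \<Rightarrow> 'a \<Rightarrow> bool) \<Rightarrow> nat" where
  "fw r V E = (LEAST k. flipper_wins V E r k)"

end

theory Submission
  imports Defs
begin

text \<open>
  The runner maintains an invariant that a flip with \<open>k\<close> labels cannot destroy. The key
  observation is that two vertices with the same label are flipped identically towards every
  vertex \<open>w\<close>; so if \<open>w\<close> is adjacent to one and not to the other, then after the flip \<open>w\<close> is
  still adjacent to one of them.

  Radius 2, \<open>X\<close> 2-shattered: the runner stays within distance 2 of more than \<open>k\<close> vertices of
  \<open>X\<close>. Two of them, \<open>y1\<close> and \<open>y2\<close>, share a label, and using the witnesses of the pairs
  \<open>{y1, z}\<close> one sees that within distance 2 of \<open>y1\<close> or \<open>y2\<close> the flip leaves at most two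
  vertices of each label class unreached. So one of them keeps the invariant unless
  \<open>|X| \<le> 4k\<close>.

  Radius 1, \<open>X\<close> shattered: the runner alternates between vertices with more than \<open>k\<close>
  neighbours in \<open>X\<close> and vertices that have such a neighbour whatever the next flip is. Among
  two neighbours \<open>x1\<close>, \<open>x2\<close> in \<open>X\<close> with the same label, one is of the second kind. Otherwise
  the two flips \<open>H1\<close>, \<open>H2\<close> refuting this would both be defeated by a vertex \<open>w\<close> whose
  neighbourhood in \<open>X\<close> contains \<open>x1\<close>, avoids \<open>x2\<close> and differs from every union of label
  classes of \<open>H1\<close> and of \<open>H2\<close> in at least \<open>k + 2\<close> places. Such a set is read off from an
  orientation with balanced degrees of the bipartite multigraph whose edges join the two labels
  of each vertex of \<open>X\<close>; it exists once \<open>|X| > 8k\<close>.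
\<close>

section \<open>Graphs, flips and the flipper game\<close>

locale fin_graph =
  fixes V :: "'a set" and E :: "'a \<Rightarrow> 'a \<Rightarrow> bool"
  assumes finite_graph: "finite_graph V E"
begin

lemma finite_V: "finite V"
  using finite_graph unfolding finite_graph_def by blast

lemma E_sym: "E x y \<Longrightarrow> E y x"
  using finite_graph unfolding finite_graph_def by blast

lemma E_irrefl: "E x y \<Longrightarrow> x \<noteq> y"
  using finite_graph unfolding finite_graph_def by blast

end

lemma not_flipper_wins_from_if_invariant:
  assumes step: "\<And>H v H'. P H v \<Longrightarrow> is_k_flip V E k H' \<Longrightarrow>
     \<exists>w. within_dist H r v w \<and> \<not> isolated H' w \<and> P H' w"
    and "P H v"
  shows "\<not> flipper_wins_from V E r k H v"
proof
  assume "flipper_wins_from V E r k H v"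
  then show False using \<open>P H v\<close>
  proof (induction rule: flipper_wins_from.induct)
    case (step H' H v)
    then show ?case using assms(1)[OF step.prems step.hyps(1)] by blast
  qed
qed

lemma flipper_wins_card:
  assumes "finite_graph V E"
  shows "flipper_wins V E r (card V)"
proof -
  from assms have "finite V" and sym: "\<And>x y. E x y \<Longrightarrow> E y x"
    unfolding finite_graph_def by auto
  then obtain p where p: "bij_betw p V {0..<card V}"
    using ex_bij_betw_finite_nat by blast
  then have inj: "inj_on p V" and p_less: "\<forall>v\<in>V. p v < card V"
    unfolding bij_betw_def by auto
  define F where "F i j \<longleftrightarrow> (\<exists>x\<in>V. \<exists>y\<in>V. p x = i \<and> p y = j \<and> E x y)" for i j
  have F_iff: "F (p x) (p y) \<longleftrightarrow> E x y" if "x \<in> V" "y \<in> V" for x y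
    using inj_onD[OF inj] that unfolding F_def by metis
  have "F j i" if "F i j" for i j
    using that sym unfolding F_def by metis
  with p_less have flip: "is_k_flip V E (card V) (flip_graph V E p F)"
    unfolding is_k_flip_def by blast
  have "isolated (flip_graph V E p F) w" for w
    using F_iff unfolding isolated_def flip_graph_def by blast
  then show ?thesis
    unfolding flipper_wins_def using flipper_wins_from.step[OF flip] by blast
qed

lemma flipper_wins_fw:
  assumes "finite_graph V E"
  shows "flipper_wins V E r (fw r V E)"
  unfolding fw_def using flipper_wins_card[OF assms] by (rule LeastI)

lemma within_dist_refl: "within_dist H r a a"
  unfolding within_dist_def by (rule exI[of _ 0]) auto

lemma within_dist_edge: "H a b \<Longrightarrow> 1 \<le> r \<Longrightarrow> within_dist H r a b"
  unfolding within_dist_def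
  by (rule exI[of _ 1], rule exI[of _ "\<lambda>i. if i = 0 then a else b"]) auto

lemma within_dist_edge2: "H a b \<Longrightarrow> H b c \<Longrightarrow> 2 \<le> r \<Longrightarrow> within_dist H r a c"
  unfolding within_dist_def
  by (rule exI[of _ 2], rule exI[of _ "\<lambda>i. if i = 0 then a else if i = 1 then b else c"])
    (auto simp: less_2_cases_iff)

lemma not_isolated_if_within_dist:
  assumes "within_dist H r a b" "a \<noteq> b"
  shows "\<not> isolated H a"
proof -
  obtain m f where f: "f 0 = a" "f m = b" "\<forall>j<m. H (f j) (f (Suc j))"
    using assms(1) unfolding within_dist_def by blast
  with assms(2) have "0 < m" by (cases m) auto
  with f show ?thesis unfolding isolated_def by auto
qed

lemma label_collision:
  fixes p :: "'a \<Rightarrow> nat"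
  assumes "finite A" "k < card A" "\<forall>x\<in>A. p x < k"
  obtains x y where "x \<in> A" "y \<in> A" "x \<noteq> y" "p x = p y"
proof -
  have "card (p ` A) \<le> card {..<k}"
    using assms(3) by (intro card_mono) auto
  with assms(2) have "\<not> inj_on p A"
    by (intro pigeonhole) simp
  then show ?thesis using that unfolding inj_on_def by blast
qed

text \<open>Two vertices with the same label are flipped identically towards every other vertex,
  so a flip cannot hide both an edge and a non-edge from a common vertex.\<close>
lemma flip_graph_same_label:
  assumes "p a = p b" "E a w" "\<not> E b w" "a \<in> V" "b \<in> V" "w \<in> V" "w \<noteq> a" "w \<noteq> b"
  shows "flip_graph V E p F a w \<or> flip_graph V E p F b w"
  using assms unfolding flip_graph_def by auto

section \<open>Balanced orientations and splits\<close>

definition arc :: "'v \<Rightarrow> 'v \<Rightarrow> 'v \<Rightarrow> int" where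
  "arc a b x = of_bool (x = a) - of_bool (x = b)"

text \<open>The edge \<open>z\<close> joins \<open>s z\<close> and \<open>t z\<close>; \<open>ori z\<close> orients it from \<open>s z\<close> to \<open>t z\<close>.\<close>
definition oriented_arc :: "('e \<Rightarrow> 'v) \<Rightarrow> ('e \<Rightarrow> 'v) \<Rightarrow> ('e \<Rightarrow> bool) \<Rightarrow> 'e \<Rightarrow> 'v \<Rightarrow> int" where
  "oriented_arc s t ori z = (if ori z then arc (s z) (t z) else arc (t z) (s z))"

definition net_outdeg :: "('e \<Rightarrow> 'v) \<Rightarrow> ('e \<Rightarrow> 'v) \<Rightarrow> ('e \<Rightarrow> bool) \<Rightarrow> 'e set \<Rightarrow> 'v \<Rightarrow> int" where
  "net_outdeg s t ori Z x = (\<Sum>z\<in>Z. oriented_arc s t ori z x)"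

text \<open>Two edges \<open>u v\<close> and \<open>v w\<close> may be replaced by the single edge \<open>u w\<close>: orienting the
  pair consistently with it leaves every net out-degree unchanged.\<close>
lemma net_outdeg_merge:
  assumes "finite Z" "z1 \<in> Z" "z2 \<in> Z" "z1 \<noteq> z2"
    and v1: "v = s z1 \<or> v = t z1" and v2: "v = s z2 \<or> v = t z2"
  defines "u \<equiv> if s z1 = v then t z1 else s z1"
    and "w \<equiv> if s z2 = v then t z2 else s z2"
  shows "\<exists>ori. \<forall>x. net_outdeg s t ori Z x = net_outdeg (s(z1 := u)) (t(z1 := w)) ori' (Z - {z2}) x"
proof -
  define ori where "ori = ori'(z1 := (s z1 = v) \<noteq> ori' z1, z2 := (s z2 = v) = ori' z1)"
  define s' t' where "s' = s(z1 := u)" and "t' = t(z1 := w)"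
  have "ori z1 = ((s z1 = v) \<noteq> ori' z1)" "ori z2 = ((s z2 = v) = ori' z1)"
    using \<open>z1 \<noteq> z2\<close> unfolding ori_def by simp_all
  then have "oriented_arc s t ori z1 = (if ori' z1 then arc u v else arc v u)"
    "oriented_arc s t ori z2 = (if ori' z1 then arc v w else arc w v)"
    using v1 v2 unfolding oriented_arc_def u_def w_def by auto
  then have merged: "oriented_arc s t ori z2 x + oriented_arc s t ori z1 x = oriented_arc s' t' ori' z1 x" for x
    unfolding oriented_arc_def s'_def t'_def arc_def by simp
  have rest: "oriented_arc s t ori z = oriented_arc s' t' ori' z" if "z \<in> Z - {z2} - {z1}" for z
    using that unfolding oriented_arc_def ori_def s'_def t'_def by simp
  have split1: "net_outdeg a b d Z x = oriented_arc a b d z2 x + net_outdeg a b d (Z - {z2}) x"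
    for a b d x
    unfolding net_outdeg_def using assms(1,3) by (rule sum.remove)
  have split2: "net_outdeg a b d (Z - {z2}) x
      = oriented_arc a b d z1 x + net_outdeg a b d (Z - {z2} - {z1}) x" for a b d x
    unfolding net_outdeg_def using assms(1,2,4) by (intro sum.remove) auto
  have "net_outdeg s t ori (Z - {z2} - {z1}) x = net_outdeg s' t' ori' (Z - {z2} - {z1}) x" for x
    unfolding net_outdeg_def using rest by simp
  then have "net_outdeg s t ori Z x = net_outdeg s' t' ori' (Z - {z2}) x" for x
    using split1 split2 merged[of x] by (metis add.assoc)
  then show ?thesis
    unfolding s'_def t'_def by blast
qed

lemma net_outdeg_disjoint_edges:
  assumes "finite Z"
    and disj: "\<And>z1 z2. z1 \<in> Z \<Longrightarrow> z2 \<in> Z \<Longrightarrow> z1 \<noteq> z2 \<Longrightarrow> {s z1, t z1} \<inter> {s z2, t z2} = {}"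
  shows "\<bar>net_outdeg s t ori Z x\<bar> \<le> 1"
proof (cases "\<exists>z\<in>Z. x \<in> {s z, t z}")
  case True
  then obtain z0 where z0: "z0 \<in> Z" "x \<in> {s z0, t z0}" by blast
  have "x \<notin> {s z, t z}" if "z \<in> Z - {z0}" for z
    using disj[of z z0] that z0 by blast
  then have "net_outdeg s t ori (Z - {z0}) x = 0"
    unfolding net_outdeg_def oriented_arc_def arc_def by (intro sum.neutral) auto
  moreover have "net_outdeg s t ori Z x = oriented_arc s t ori z0 x + net_outdeg s t ori (Z - {z0}) x"
    unfolding net_outdeg_def using assms(1) z0(1) by (simp add: sum.remove)
  ultimately show ?thesis
    unfolding oriented_arc_def arc_def by auto
next
  case False
  then have "net_outdeg s t ori Z x = 0"
    unfolding net_outdeg_def oriented_arc_def arc_def by (intro sum.neutral) auto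
  then show ?thesis by simp
qed

text \<open>Merge two edges at a common vertex until all edges are disjoint.\<close>
lemma balanced_orientation_exists:
  "finite Z \<Longrightarrow> \<exists>ori. \<forall>x. \<bar>net_outdeg s t ori Z x\<bar> \<le> 1"
proof (induction "card Z" arbitrary: Z s t rule: less_induct)
  case (less Z s t)
  show ?case
  proof (cases "\<exists>z1\<in>Z. \<exists>z2\<in>Z. z1 \<noteq> z2 \<and> {s z1, t z1} \<inter> {s z2, t z2} \<noteq> {}")
    case True
    then obtain z1 z2 v where z: "z1 \<in> Z" "z2 \<in> Z" "z1 \<noteq> z2"
      and v: "v = s z1 \<or> v = t z1" "v = s z2 \<or> v = t z2"
      by blast
    define u where "u = (if s z1 = v then t z1 else s z1)"
    define w where "w = (if s z2 = v then t z2 else s z2)"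
    have "card (Z - {z2}) < card Z"
      using less.prems z(2) by (rule card_Diff1_less)
    moreover have "finite (Z - {z2})"
      using less.prems by simp
    ultimately obtain ori' where ori': "\<forall>x. \<bar>net_outdeg (s(z1 := u)) (t(z1 := w)) ori' (Z - {z2}) x\<bar> \<le> 1"
      using less.hyps by blast
    obtain ori where "\<forall>x. net_outdeg s t ori Z x = net_outdeg (s(z1 := u)) (t(z1 := w)) ori' (Z - {z2}) x"
      using net_outdeg_merge[OF less.prems z v, of ori'] unfolding u_def w_def by blast
    with ori' have "\<forall>x. \<bar>net_outdeg s t ori Z x\<bar> \<le> 1"
      by simp
    then show ?thesis by blast
  next
    case False
    then have "{s z1, t z1} \<inter> {s z2, t z2} = {}" if "z1 \<in> Z" "z2 \<in> Z" "z1 \<noteq> z2" for z1 z2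
      using that by blast
    then have "\<bar>net_outdeg s t (\<lambda>_. True) Z x\<bar> \<le> 1" for x
      by (rule net_outdeg_disjoint_edges[OF less.prems])
    then show ?thesis by blast
  qed
qed

definition discrepancy :: "'a set \<Rightarrow> ('a \<Rightarrow> nat) \<Rightarrow> 'a set \<Rightarrow> nat \<Rightarrow> int" where
  "discrepancy X q Y c = (\<Sum>x\<in>X. if q x = c then (if x \<in> Y then 1 else -1) else 0)"

definition mismatch :: "'a set \<Rightarrow> 'a set \<Rightarrow> ('a \<Rightarrow> bool) \<Rightarrow> nat" where
  "mismatch X Y P = card {x\<in>X. (x \<in> Y) \<noteq> P x}"

text \<open>Orient the bipartite multigraph in which each \<open>z\<close> is an edge between the label
  \<open>q1 z\<close> on the left and the label \<open>q2 z\<close> on the right, and split along the orientation.\<close>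
lemma balanced_split:
  assumes "finite Z"
  obtains W where "W \<subseteq> Z" "\<And>c. \<bar>discrepancy Z q1 W c\<bar> \<le> 1" "\<And>c. \<bar>discrepancy Z q2 W c\<bar> \<le> 1"
proof -
  define s t :: "'a \<Rightarrow> nat + nat" where "s z = Inl (q1 z)" and "t z = Inr (q2 z)" for z
  obtain ori where ori: "\<forall>x. \<bar>net_outdeg s t ori Z x\<bar> \<le> 1"
    using balanced_orientation_exists[OF assms] by blast
  define W where "W = {z\<in>Z. ori z}"
  have "discrepancy Z q1 W c = net_outdeg s t ori Z (Inl c)" for c
    unfolding discrepancy_def net_outdeg_def oriented_arc_def arc_def W_def s_def t_def
    by (rule sum.cong) auto
  moreover have "discrepancy Z q2 W c = - net_outdeg s t ori Z (Inr c)" for c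
    unfolding discrepancy_def net_outdeg_def oriented_arc_def arc_def W_def s_def t_def
      sum_negf[symmetric]
    by (rule sum.cong) auto
  moreover have "W \<subseteq> Z"
    unfolding W_def by blast
  ultimately show ?thesis
    using that ori by simp
qed

lemma sum_label_classes:
  fixes q :: "'a \<Rightarrow> nat"
  assumes "\<forall>x\<in>X. q x < k"
  shows "(\<Sum>c<k. \<Sum>x\<in>X. if q x = c then f x c else 0) = (\<Sum>x\<in>X. f x (q x))"
proof -
  have "(\<Sum>c<k. \<Sum>x\<in>X. if q x = c then f x c else 0) = (\<Sum>x\<in>X. \<Sum>c<k. if q x = c then f x c else 0)"
    by (rule sum.swap)
  also have "\<dots> = (\<Sum>x\<in>X. f x (q x))"
    using assms by (intro sum.cong) auto
  finally show ?thesis .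
qed

text \<open>Within a label class of size \<open>n\<close> and discrepancy \<open>d\<close>, \<open>Y\<close> has \<open>(n + d)/2\<close> and its
  complement \<open>(n - d)/2\<close> elements, so at least \<open>(n - |d|)/2\<close> of them are mismatched.\<close>
lemma card_le_mismatch_discrepancy:
  fixes q :: "'a \<Rightarrow> nat"
  assumes "finite X" and q: "\<forall>x\<in>X. q x < k"
  shows "int (card X) \<le> 2 * int (mismatch X Y (\<lambda>x. P (q x))) + (\<Sum>c<k. \<bar>discrepancy X q Y c\<bar>)"
proof -
  define a where "a c = (\<Sum>x\<in>X. if q x = c then of_bool (x \<in> Y) else 0 :: int)" for c
  define b where "b c = (\<Sum>x\<in>X. if q x = c then of_bool (x \<notin> Y) else 0 :: int)" for c
  define m where "m c = (\<Sum>x\<in>X. if q x = c then of_bool ((x \<in> Y) \<noteq> P c) else 0 :: int)" for c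
  have "discrepancy X q Y c = a c - b c" for c
    unfolding discrepancy_def a_def b_def sum_subtractf[symmetric] by (rule sum.cong) auto
  moreover have "m c = (if P c then b c else a c)" for c
    unfolding m_def a_def b_def by (cases "P c") (auto intro!: sum.cong)
  moreover have "a c \<ge> 0" "b c \<ge> 0" for c
    unfolding a_def b_def by (auto intro!: sum_nonneg)
  ultimately have class_bound: "a c + b c \<le> 2 * m c + \<bar>discrepancy X q Y c\<bar>" for c
    by auto
  have "(\<Sum>c<k. a c + b c) = (\<Sum>c<k. \<Sum>x\<in>X. if q x = c then of_bool (x \<in> Y) + of_bool (x \<notin> Y) else 0)"
    unfolding a_def b_def sum.distrib[symmetric] by (intro sum.cong) auto
  also have "\<dots> = (\<Sum>x\<in>X. 1)"
    unfolding sum_label_classes[OF q] by (intro sum.cong) auto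
  also have "\<dots> = int (card X)"
    by simp
  moreover have "(\<Sum>c<k. m c) = int (mismatch X Y (\<lambda>x. P (q x)))"
    unfolding m_def sum_label_classes[OF q, of "\<lambda>x c. of_bool ((x \<in> Y) \<noteq> P c)"] mismatch_def
    using assms(1) by (simp add: Int_def)
  moreover have "(\<Sum>c<k. a c + b c) \<le> (\<Sum>c<k. 2 * m c + \<bar>discrepancy X q Y c\<bar>)"
    by (rule sum_mono) (rule class_bound)
  ultimately show ?thesis
    by (simp add: sum.distrib sum_distrib_left[symmetric])
qed

lemma discrepancy_insert_pair:
  assumes "finite Z" "x1 \<notin> Z" "x2 \<notin> Z" "x1 \<noteq> x2" "W \<subseteq> Z"
  shows "discrepancy (insert x1 (insert x2 Z)) q (insert x1 W) c
           = discrepancy Z q W c + of_bool (q x1 = c) - of_bool (q x2 = c)"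
proof -
  have "discrepancy Z q (insert x1 W) c = discrepancy Z q W c"
    unfolding discrepancy_def using assms(2) by (intro sum.cong) auto
  with assms show ?thesis
    unfolding discrepancy_def by auto
qed

lemma sum_abs_label_difference:
  fixes q :: "'a \<Rightarrow> nat"
  assumes "q x1 < k" "q x2 < k"
  shows "(\<Sum>c<k. \<bar>of_bool (q x1 = c) - of_bool (q x2 = c) :: int\<bar>) = (if q x1 = q x2 then 0 else 2)"
proof (cases "q x1 = q x2")
  case False
  then have "(\<Sum>c<k. \<bar>of_bool (q x1 = c) - of_bool (q x2 = c) :: int\<bar>)
      = (\<Sum>c<k. (if c = q x1 then 1 else 0) + (if c = q x2 then 1 else 0))"
    by (intro sum.cong) auto
  with False assms show ?thesis
    by (simp add: sum.distrib)
qed simp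

lemma mismatch_lower_bound:
  fixes q :: "'a \<Rightarrow> nat"
  assumes "finite X" "x1 \<in> X" "x2 \<in> X" "x1 \<noteq> x2" and q: "\<forall>x\<in>X. q x < k"
    and big: "8 * k + 1 \<le> card X"
    and W: "W \<subseteq> X - {x1, x2}" "\<And>c. \<bar>discrepancy (X - {x1, x2}) q W c\<bar> \<le> 1"
  shows "k + 3 \<le> mismatch X (insert x1 W) (\<lambda>x. P (q x))"
proof -
  have X: "X = insert x1 (insert x2 (X - {x1, x2}))"
    using assms(2,3) by auto
  have "\<bar>discrepancy X q (insert x1 W) c\<bar> \<le> 1 + \<bar>of_bool (q x1 = c) - of_bool (q x2 = c)\<bar>" for c
    using W(2)[of c] discrepancy_insert_pair[of "X - {x1, x2}" x1 x2 W q c] assms(1,4) W(1)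
    by (simp flip: X)
  then have "(\<Sum>c<k. \<bar>discrepancy X q (insert x1 W) c\<bar>)
      \<le> (\<Sum>c<k. 1 + \<bar>of_bool (q x1 = c) - of_bool (q x2 = c) :: int\<bar>)"
    by (rule sum_mono)
  also have "\<dots> = int k + (if q x1 = q x2 then 0 else 2)"
    using q assms(2,3) by (simp add: sum.distrib sum_abs_label_difference)
  finally have "int (card X) \<le> 2 * int (mismatch X (insert x1 W) (\<lambda>x. P (q x))) + int k + (if q x1 = q x2 then 0 else 2)"
    using card_le_mismatch_discrepancy[OF assms(1) q, of "insert x1 W" P] by linarith
  moreover have "q x1 < k" "q x2 < k"
    using q assms(2,3) by auto
  then have "1 \<le> k" "q x1 \<noteq> q x2 \<Longrightarrow> 2 \<le> k"
    by arith+
  ultimately show ?thesis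
    using big by (auto split: if_split_asm)
qed

lemma far_from_label_unions:
  fixes q1 q2 :: "'a \<Rightarrow> nat"
  assumes "finite X" "x1 \<in> X" "x2 \<in> X" "x1 \<noteq> x2"
    and "\<forall>x\<in>X. q1 x < k" "\<forall>x\<in>X. q2 x < k" and big: "8 * k + 1 \<le> card X"
  obtains Y where "Y \<subseteq> X" "x1 \<in> Y" "x2 \<notin> Y"
    "\<And>P. k + 3 \<le> mismatch X Y (\<lambda>x. P (q1 x))" "\<And>P. k + 3 \<le> mismatch X Y (\<lambda>x. P (q2 x))"
proof -
  obtain W where W: "W \<subseteq> X - {x1, x2}"
    "\<And>c. \<bar>discrepancy (X - {x1, x2}) q1 W c\<bar> \<le> 1" "\<And>c. \<bar>discrepancy (X - {x1, x2}) q2 W c\<bar> \<le> 1"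
    using balanced_split[of "X - {x1, x2}" q1 q2] assms(1) by blast
  show ?thesis
  proof (rule that[of "insert x1 W"])
    show "insert x1 W \<subseteq> X" "x1 \<in> insert x1 W" "x2 \<notin> insert x1 W"
      using W(1) assms(2,4) by auto
    show "k + 3 \<le> mismatch X (insert x1 W) (\<lambda>x. P (q1 x))" for P
      by (rule mismatch_lower_bound[OF assms(1-5) big W(1,2)])
    show "k + 3 \<le> mismatch X (insert x1 W) (\<lambda>x. P (q2 x))" for P
      by (rule mismatch_lower_bound[OF assms(1-4,6) big W(1,3)])
  qed
qed

lemma mismatch_le_Suc_if_differ_at:
  assumes "finite X" "\<And>x. x \<noteq> z \<Longrightarrow> x \<in> Y \<longleftrightarrow> x \<in> Y'"
  shows "mismatch X Y P \<le> mismatch X Y' P + 1"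
proof -
  have "{x\<in>X. (x \<in> Y) \<noteq> P x} \<subseteq> insert z {x\<in>X. (x \<in> Y') \<noteq> P x}"
    using assms(2) by auto
  then have "mismatch X Y P \<le> card (insert z {x\<in>X. (x \<in> Y') \<noteq> P x})"
    unfolding mismatch_def using assms(1) by (intro card_mono) auto
  also have "\<dots> \<le> mismatch X Y' P + 1"
    unfolding mismatch_def using assms(1) by (simp add: card_insert_if)
  finally show ?thesis .
qed

lemma far_from_label_unions_avoiding:
  fixes q1 q2 :: "'a \<Rightarrow> nat"
  assumes "finite X" "x1 \<in> X" "x2 \<in> X" "x1 \<noteq> x2"
    and "\<forall>x\<in>X. q1 x < k" "\<forall>x\<in>X. q2 x < k" and big: "8 * k + 1 \<le> card X"
  obtains Y where "Y \<subseteq> X" "x1 \<in> Y" "x2 \<notin> Y" "Y \<noteq> N"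
    "\<And>P. k + 2 \<le> mismatch X Y (\<lambda>x. P (q1 x))" "\<And>P. k + 2 \<le> mismatch X Y (\<lambda>x. P (q2 x))"
proof -
  obtain Y where Y: "Y \<subseteq> X" "x1 \<in> Y" "x2 \<notin> Y"
    "\<And>P. k + 3 \<le> mismatch X Y (\<lambda>x. P (q1 x))" "\<And>P. k + 3 \<le> mismatch X Y (\<lambda>x. P (q2 x))"
    using far_from_label_unions[OF assms] by blast
  have "1 \<le> k"
    using assms(2,5) by (cases k) auto
  have "\<not> X \<subseteq> {x1, x2}"
  proof
    assume "X \<subseteq> {x1, x2}"
    then have "card X \<le> card {x1, x2}"
      by (intro card_mono) auto
    also have "\<dots> \<le> 2"
      by (simp add: card_insert_if)
    finally show False
      using big \<open>1 \<le> k\<close> by simp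
  qed
  then obtain z where z: "z \<in> X" "z \<noteq> x1" "z \<noteq> x2"
    by blast
  define Y' where "Y' = (Y - {z}) \<union> ({z} - Y)"
  have Y'_iff: "x \<in> Y' \<longleftrightarrow> x \<in> Y" if "x \<noteq> z" for x
    using that unfolding Y'_def by auto
  have "Y' \<noteq> Y"
    unfolding Y'_def by auto
  then obtain T where T: "T \<in> {Y, Y'}" "T \<noteq> N"
    by blast
  show ?thesis
  proof (rule that[of T])
    show "T \<noteq> N"
      by (rule T(2))
    show "T \<subseteq> X" "x1 \<in> T" "x2 \<notin> T"
      using T(1) Y(1-3) z unfolding Y'_def by auto
    have Suc_mismatch: "mismatch X Y P \<le> mismatch X T P + 1" for P
    proof (cases "T = Y")
      case False
      with T(1) have "T = Y'"
        by blast
      then show ?thesis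
        by (metis Y'_iff mismatch_le_Suc_if_differ_at[OF assms(1)])
    qed simp
    show "k + 2 \<le> mismatch X T (\<lambda>x. P (q1 x))" for P
      using Y(4)[of P] Suc_mismatch[of "\<lambda>x. P (q1 x)"] by linarith
    show "k + 2 \<le> mismatch X T (\<lambda>x. P (q2 x))" for P
      using Y(5)[of P] Suc_mismatch[of "\<lambda>x. P (q2 x)"] by linarith
  qed
qed

section \<open>Radius 2 and 2-shattered sets\<close>

locale two_shattered_set = fin_graph +
  fixes X :: "'a set"
  assumes two_shattered: "two_shattered V E X"
begin

lemma X_subset: "X \<subseteq> V"
  using two_shattered unfolding two_shattered_def by blast

lemma finite_X: "finite X"
  using X_subset finite_V by (rule finite_subset)

lemma pair_witness:
  assumes "a \<in> X" "b \<in> X" "a \<noteq> b"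
  obtains c where "c \<in> V" "nbhd V E c \<inter> X = {a, b}"
  using assms two_shattered unfolding two_shattered_def by blast

definition reach2 :: "('a \<Rightarrow> 'a \<Rightarrow> bool) \<Rightarrow> 'a \<Rightarrow> 'a set" where
  "reach2 H v = {y\<in>X. within_dist H 2 v y}"

lemma finite_reach2: "finite (reach2 H v)"
  unfolding reach2_def using finite_X by simp

lemma X_subset_reach2:
  assumes "x \<in> X"
  shows "X \<subseteq> reach2 E x"
proof
  fix y
  assume "y \<in> X"
  show "y \<in> reach2 E x"
  proof (cases "y = x")
    case True
    with \<open>y \<in> X\<close> show ?thesis
      unfolding reach2_def by (simp add: within_dist_refl)
  next
    case False
    then obtain c where "c \<in> V" "nbhd V E c \<inter> X = {x, y}"
      using pair_witness[OF assms \<open>y \<in> X\<close>] by metis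
    then have "E x c" "E c y"
      unfolding nbhd_def by (auto intro: E_sym)
    with \<open>y \<in> X\<close> show ?thesis
      unfolding reach2_def by (simp add: within_dist_edge2)
  qed
qed

text \<open>The witness \<open>w\<close> of the pair \<open>{y1, z}\<close> is adjacent in the flip to \<open>y1\<close> or \<open>y2\<close>;
  since \<open>z\<close> stays out of reach, the flip must cut the edge \<open>w z\<close>, and hence joins \<open>w\<close> to every
  other vertex of the label class of \<open>z\<close>, which thereby becomes reachable.\<close>
lemma unreached_class_subset:
  fixes p :: "'a \<Rightarrow> nat" and F :: "nat \<Rightarrow> nat \<Rightarrow> bool" and y1 y2 :: 'a
  defines "H \<equiv> flip_graph V E p F"
  defines "R \<equiv> reach2 H y1 \<union> reach2 H y2"
  assumes y: "y1 \<in> X" "y2 \<in> X" "y1 \<noteq> y2" "p y1 = p y2"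
    and z: "z \<in> X" "z \<notin> R"
    and w: "w \<in> V" "nbhd V E w \<inter> X = {y1, z}" "w \<noteq> y2"
  shows "{x\<in>X. p x = p z} - R \<subseteq> {z, w}"
proof
  fix x
  assume x: "x \<in> {x\<in>X. p x = p z} - R"
  have yR: "y1 \<in> R" "y2 \<in> R"
    using y(1,2) unfolding R_def reach2_def by (auto simp: within_dist_refl)
  have E_w: "E w u \<longleftrightarrow> u = y1 \<or> u = z" if "u \<in> X" for u
    using w(2) that X_subset unfolding nbhd_def by blast
  have "E w y1" "E w z"
    using E_w y(1) z(1) by simp_all
  moreover have "\<not> E w y2"
    using E_w[OF y(2)] y(3) yR(2) z(2) by blast
  ultimately have "w \<noteq> y1" "w \<noteq> z" "E y1 w" "\<not> E y2 w"
    using E_irrefl E_sym by metis+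
  moreover have "y1 \<in> V" "y2 \<in> V"
    using y(1,2) X_subset by blast+
  ultimately have "H y1 w \<or> H y2 w"
    unfolding H_def using y(4) w(1,3) by (intro flip_graph_same_label)
  have reached: "u \<in> R" if "u \<in> X" "H w u" for u
  proof -
    have "within_dist H 2 y u" if "H y w" for y
      using that \<open>H w u\<close> by (rule within_dist_edge2) simp
    then have "within_dist H 2 y1 u \<or> within_dist H 2 y2 u"
      using \<open>H y1 w \<or> H y2 w\<close> by blast
    with that(1) show ?thesis
      unfolding R_def reach2_def by blast
  qed
  then have "\<not> H w z"
    using z by blast
  with \<open>E w z\<close> \<open>w \<noteq> z\<close> w(1) z(1) X_subset have F_wz: "F (p w) (p z)"
    unfolding H_def flip_graph_def by auto
  show "x \<in> {z, w}"
  proof (rule ccontr)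
    assume "x \<notin> {z, w}"
    moreover have "x \<noteq> y1"
      using x yR by blast
    ultimately have "\<not> E w x" "x \<noteq> w"
      using E_w[of x] x by auto
    with x F_wz w(1) X_subset have "H w x"
      unfolding H_def flip_graph_def by auto
    with x reached show False
      by blast
  qed
qed

lemma card_unreached_class_le_2:
  fixes p :: "'a \<Rightarrow> nat" and F :: "nat \<Rightarrow> nat \<Rightarrow> bool" and y1 y2 :: 'a
  defines "H \<equiv> flip_graph V E p F"
  defines "R \<equiv> reach2 H y1 \<union> reach2 H y2"
  assumes y: "y1 \<in> X" "y2 \<in> X" "y1 \<noteq> y2" "p y1 = p y2"
  shows "card ({x\<in>X. p x = c} - R) \<le> 2"
proof -
  \<comment> \<open>the witness of a pair \<open>{y1, z}\<close> can only be \<open>y2\<close> for the unique \<open>z\<close> in \<open>B\<close>\<close>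
  define B where "B = {z\<in>X. z \<noteq> y1 \<and> nbhd V E y2 \<inter> X = {y1, z}}"
  have "finite B" "\<forall>a\<in>B. \<forall>b\<in>B. a = b"
    unfolding B_def using finite_X by (auto simp: doubleton_eq_iff)
  then have "card B \<le> 1"
    using card_le_Suc0_iff_eq by auto
  show ?thesis
  proof (cases "{x\<in>X. p x = c} - R \<subseteq> B")
    case True
    then have "card ({x\<in>X. p x = c} - R) \<le> card B"
      using \<open>finite B\<close> by (rule card_mono[rotated])
    with \<open>card B \<le> 1\<close> show ?thesis
      by linarith
  next
    case False
    then obtain z where z: "z \<in> X" "p z = c" "z \<notin> R" "z \<notin> B"
      by blast
    have "y1 \<in> R"
      using y(1) unfolding R_def reach2_def by (auto simp: within_dist_refl)
    with z(3) have "z \<noteq> y1"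
      by blast
    then obtain w where w: "w \<in> V" "nbhd V E w \<inter> X = {y1, z}"
      using pair_witness[OF y(1) z(1)] by metis
    with z(1,4) \<open>z \<noteq> y1\<close> have "w \<noteq> y2"
      unfolding B_def by blast
    have "{x\<in>X. p x = p z} - R \<subseteq> {z, w}"
      using z(3) unfolding R_def H_def by (rule unreached_class_subset[OF y z(1) _ w \<open>w \<noteq> y2\<close>])
    then have "{x\<in>X. p x = c} - R \<subseteq> {z, w}"
      using z(2) by simp
    then have "card ({x\<in>X. p x = c} - R) \<le> card {z, w}"
      by (rule card_mono[rotated]) simp
    also have "\<dots> \<le> 2"
      by (simp add: card_insert_if)
    finally show ?thesis .
  qed
qed


lemma card_le_reach2_flip:
  fixes p :: "'a \<Rightarrow> nat" and F :: "nat \<Rightarrow> nat \<Rightarrow> bool"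
  defines "H \<equiv> flip_graph V E p F"
  assumes p: "\<forall>v\<in>V. p v < k" and y: "y1 \<in> X" "y2 \<in> X" "y1 \<noteq> y2" "p y1 = p y2"
  shows "card X \<le> card (reach2 H y1) + card (reach2 H y2) + 2 * k"
proof -
  define R where "R = reach2 H y1 \<union> reach2 H y2"
  have "X \<subseteq> R \<union> (\<Union>c<k. {x\<in>X. p x = c} - R)"
    using p X_subset by blast
  then have "card X \<le> card (R \<union> (\<Union>c<k. {x\<in>X. p x = c} - R))"
    by (rule card_mono[rotated]) (simp add: R_def finite_reach2 finite_X)
  also have "\<dots> \<le> card R + card (\<Union>c<k. {x\<in>X. p x = c} - R)"
    by (rule card_Un_le)
  also have "card R \<le> card (reach2 H y1) + card (reach2 H y2)"
    unfolding R_def by (rule card_Un_le)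
  also have "card (\<Union>c<k. {x\<in>X. p x = c} - R) \<le> (\<Sum>c<k. card ({x\<in>X. p x = c} - R))"
    by (rule card_UN_le) simp
  also have "\<dots> \<le> (\<Sum>c<k. 2)"
    unfolding R_def H_def by (rule sum_mono) (rule card_unreached_class_le_2[OF y])
  finally show ?thesis
    by simp
qed

lemma runner_step_radius2:
  assumes big: "4 * k < card X" and "k < card (reach2 H v)" and "is_k_flip V E k H'"
  shows "\<exists>w. within_dist H 2 v w \<and> \<not> isolated H' w \<and> k < card (reach2 H' w)"
proof -
  obtain p F where p: "\<forall>v\<in>V. p v < k" and H': "H' = flip_graph V E p F"
    using assms(3) unfolding is_k_flip_def by blast
  have "\<forall>x\<in>reach2 H v. p x < k"
    using p X_subset unfolding reach2_def by blast
  then obtain y1 y2 where y: "y1 \<in> reach2 H v" "y2 \<in> reach2 H v" "y1 \<noteq> y2" "p y1 = p y2"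
    by (rule label_collision[OF finite_reach2 assms(2)])
  then have "y1 \<in> X" "y2 \<in> X"
    unfolding reach2_def by blast+
  with p y(3,4) big have "k < card (reach2 H' y1) \<or> k < card (reach2 H' y2)"
    using card_le_reach2_flip[of p k y1 y2 F] unfolding H' by linarith
  then obtain y where y': "y \<in> reach2 H v" "k < card (reach2 H' y)"
    using y(1,2) by blast
  have "1 \<le> k"
    using p \<open>y1 \<in> X\<close> X_subset by (cases k) auto
  have "\<not> reach2 H' y \<subseteq> {y}"
  proof
    assume "reach2 H' y \<subseteq> {y}"
    then have "card (reach2 H' y) \<le> 1"
      using card_mono[of "{y}"] by fastforce
    with y'(2) \<open>1 \<le> k\<close> show False
      by linarith
  qed
  then obtain u where "within_dist H' 2 y u" "y \<noteq> u"
    unfolding reach2_def by blast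
  then have "\<not> isolated H' y"
    by (rule not_isolated_if_within_dist)
  moreover have "within_dist H 2 v y"
    using y'(1) unfolding reach2_def by blast
  ultimately show ?thesis
    using y'(2) by blast
qed

lemma card_le_if_flipper_wins:
  assumes "flipper_wins V E 2 k"
  shows "card X \<le> 4 * k"
proof (rule ccontr)
  assume "\<not> card X \<le> 4 * k"
  then have big: "4 * k < card X"
    by simp
  then obtain x where x: "x \<in> X"
    by (metis card.empty ex_in_conv not_less_zero)
  have "k < card (reach2 E x)"
    using card_mono[OF finite_reach2 X_subset_reach2[OF x]] big by linarith
  then have "\<not> flipper_wins_from V E 2 k E x"
    by (rule not_flipper_wins_from_if_invariant[where P = "\<lambda>H v. k < card (reach2 H v)", rotated])
      (rule runner_step_radius2[OF big])
  with assms x X_subset show False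
    unfolding flipper_wins_def by blast
qed

end

lemma card_two_shattered_le_fw:
  assumes "finite_graph V E" "two_shattered V E X"
  shows "card X \<le> 4 * fw 2 V E"
proof -
  interpret two_shattered_set V E X
    by unfold_locales (use assms in auto)
  show ?thesis
    using card_le_if_flipper_wins flipper_wins_fw[OF assms(1)] by blast
qed


section \<open>Radius 1 and shattered sets\<close>

locale shattered_set = fin_graph +
  fixes X :: "'a set"
  assumes shattered: "shattered V E X"
begin

lemma X_subset: "X \<subseteq> V"
  using shattered unfolding shattered_def by blast

lemma finite_X: "finite X"
  using X_subset finite_V by (rule finite_subset)

lemma subset_witness:
  assumes "Y \<subseteq> X"
  obtains c where "c \<in> V" "nbhd V E c \<inter> X = Y"
proof -
  have "Y \<in> {nbhd V E v \<inter> X | v. v \<in> V}"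
    using assms shattered unfolding shattered_def by blast
  with that show ?thesis
    by blast
qed

definition nbX :: "('a \<Rightarrow> 'a \<Rightarrow> bool) \<Rightarrow> 'a \<Rightarrow> 'a set" where
  "nbX H v = {u\<in>X. H v u}"

definition heavy :: "nat \<Rightarrow> ('a \<Rightarrow> 'a \<Rightarrow> bool) \<Rightarrow> 'a \<Rightarrow> bool" where
  "heavy k H v \<longleftrightarrow> k < card (nbX H v)"

definition forces_heavy :: "nat \<Rightarrow> ('a \<Rightarrow> 'a \<Rightarrow> bool) \<Rightarrow> 'a \<Rightarrow> bool" where
  "forces_heavy k H v \<longleftrightarrow> (\<forall>H'. is_k_flip V E k H' \<longrightarrow> (\<exists>w. H v w \<and> heavy k H' w))"

lemma finite_nbX: "finite (nbX H v)"
  unfolding nbX_def using finite_X by simp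

lemma mismatch_le_card_nbX:
  fixes p :: "'a \<Rightarrow> nat"
  assumes "w \<in> V"
  shows "mismatch X (nbhd V E w \<inter> X) (\<lambda>x. F (p w) (p x)) \<le> card (nbX (flip_graph V E p F) w) + 1"
proof -
  have "{x\<in>X. (x \<in> nbhd V E w \<inter> X) \<noteq> F (p w) (p x)} \<subseteq> insert w (nbX (flip_graph V E p F) w)"
    using assms X_subset unfolding nbX_def nbhd_def flip_graph_def by auto
  then have "mismatch X (nbhd V E w \<inter> X) (\<lambda>x. F (p w) (p x)) \<le> card (insert w (nbX (flip_graph V E p F) w))"
    unfolding mismatch_def by (rule card_mono[rotated]) (simp add: finite_nbX)
  also have "\<dots> \<le> card (nbX (flip_graph V E p F) w) + 1"
    by (simp add: card_insert_if finite_nbX)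
  finally show ?thesis .
qed

lemma heavy_witness:
  fixes p1 p2 :: "'a \<Rightarrow> nat"
  assumes x: "x1 \<in> X" "x2 \<in> X" "x1 \<noteq> x2"
    and p: "\<forall>v\<in>V. p1 v < k" "\<forall>v\<in>V. p2 v < k" and big: "8 * k + 1 \<le> card X"
  obtains w where "w \<in> V" "w \<noteq> x1" "w \<noteq> x2" "E x1 w" "\<not> E x2 w"
    "\<And>F. heavy k (flip_graph V E p1 F) w" "\<And>F. heavy k (flip_graph V E p2 F) w"
proof -
  have q: "\<forall>x\<in>X. p1 x < k" "\<forall>x\<in>X. p2 x < k"
    using p X_subset by blast+
  obtain T where T: "T \<subseteq> X" "x1 \<in> T" "x2 \<notin> T" "T \<noteq> nbhd V E x2 \<inter> X"
    "\<And>P. k + 2 \<le> mismatch X T (\<lambda>x. P (p1 x))" "\<And>P. k + 2 \<le> mismatch X T (\<lambda>x. P (p2 x))"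
    using far_from_label_unions_avoiding[where N = "nbhd V E x2 \<inter> X", OF finite_X x q big] by blast
  obtain w where w: "w \<in> V" "nbhd V E w \<inter> X = T"
    using subset_witness[OF T(1)] by blast
  have "E w x1" "\<not> E w x2"
    using w(2) T(2,3) x(1,2) X_subset unfolding nbhd_def by blast+
  then have "w \<noteq> x1" "E x1 w" "\<not> E x2 w"
    using E_irrefl E_sym by blast+
  moreover have "w \<noteq> x2"
    using w(2) T(4) by blast
  moreover have "heavy k (flip_graph V E p1 F) w" "heavy k (flip_graph V E p2 F) w" for F
    using T(5)[of "F (p1 w)"] T(6)[of "F (p2 w)"] mismatch_le_card_nbX[OF w(1), of F p1]
      mismatch_le_card_nbX[OF w(1), of F p2]
    unfolding heavy_def w(2) by linarith+
  ultimately show ?thesis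
    using that w(1) by blast
qed

lemma forces_heavy_if_same_label:
  fixes p :: "'a \<Rightarrow> nat"
  assumes x: "x1 \<in> X" "x2 \<in> X" "x1 \<noteq> x2" "p x1 = p x2" and big: "8 * k + 1 \<le> card X"
  shows "forces_heavy k (flip_graph V E p F) x1 \<or> forces_heavy k (flip_graph V E p F) x2"
proof (rule ccontr)
  assume "\<not> ?thesis"
  then obtain H1 H2 where H: "is_k_flip V E k H1" "is_k_flip V E k H2"
    and light: "\<And>w. flip_graph V E p F x1 w \<Longrightarrow> \<not> heavy k H1 w"
      "\<And>w. flip_graph V E p F x2 w \<Longrightarrow> \<not> heavy k H2 w"
    unfolding forces_heavy_def by blast
  obtain p1 F1 p2 F2 where p: "\<forall>v\<in>V. p1 v < k" "\<forall>v\<in>V. p2 v < k"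
    and H_eq: "H1 = flip_graph V E p1 F1" "H2 = flip_graph V E p2 F2"
    using H unfolding is_k_flip_def by metis
  obtain w where w: "w \<in> V" "w \<noteq> x1" "w \<noteq> x2" "E x1 w" "\<not> E x2 w"
    "heavy k H1 w" "heavy k H2 w"
    using heavy_witness[OF x(1-3) p big] unfolding H_eq by metis
  have "x1 \<in> V" "x2 \<in> V"
    using x(1,2) X_subset by blast+
  then have "flip_graph V E p F x1 w \<or> flip_graph V E p F x2 w"
    using x(4) w(1-5) by (intro flip_graph_same_label)
  with light w(6,7) show False
    by blast
qed

lemma runner_step_radius1:
  assumes big: "8 * k + 1 \<le> card X"
    and "heavy k H v \<or> forces_heavy k H v" and "is_k_flip V E k H'"
  shows "\<exists>w. within_dist H 1 v w \<and> \<not> isolated H' w \<and> (heavy k H' w \<or> forces_heavy k H' w)"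
proof (cases "heavy k H v")
  case True
  obtain p F where p: "\<forall>v\<in>V. p v < k" and H': "H' = flip_graph V E p F"
    using assms(3) unfolding is_k_flip_def by blast
  have "k < card (nbX H v)"
    using True unfolding heavy_def .
  moreover have "\<forall>x\<in>nbX H v. p x < k"
    using p X_subset unfolding nbX_def by blast
  ultimately obtain x1 x2 where x: "x1 \<in> nbX H v" "x2 \<in> nbX H v" "x1 \<noteq> x2" "p x1 = p x2"
    by (rule label_collision[OF finite_nbX])
  then have "x1 \<in> X" "x2 \<in> X"
    unfolding nbX_def by blast+
  then obtain y where y: "y \<in> nbX H v" "forces_heavy k H' y"
    using forces_heavy_if_same_label[OF _ _ x(3,4) big] x(1,2) unfolding H' by blast
  then obtain u where "H' y u"
    using assms(3) unfolding forces_heavy_def by blast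
  then have "\<not> isolated H' y"
    unfolding isolated_def by blast
  moreover have "within_dist H 1 v y"
    using y(1) unfolding nbX_def by (simp add: within_dist_edge)
  ultimately show ?thesis
    using y(2) by blast
next
  case False
  with assms(2,3) obtain w where w: "H v w" "heavy k H' w"
    unfolding forces_heavy_def by blast
  then have "\<not> isolated H' w"
    unfolding heavy_def isolated_def nbX_def by fastforce
  moreover have "within_dist H 1 v w"
    using w(1) by (simp add: within_dist_edge)
  ultimately show ?thesis
    using w(2) by blast
qed

lemma card_le_if_flipper_wins:
  assumes "flipper_wins V E 1 k"
  shows "card X \<le> 8 * k"
proof (rule ccontr)
  assume "\<not> card X \<le> 8 * k"
  then have big: "8 * k + 1 \<le> card X"
    by simp
  obtain v where v: "v \<in> V" "nbhd V E v \<inter> X = X"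
    using subset_witness[of X] by blast
  then have "nbX E v = X"
    unfolding nbX_def nbhd_def by blast
  with big have "heavy k E v \<or> forces_heavy k E v"
    unfolding heavy_def by simp
  then have "\<not> flipper_wins_from V E 1 k E v"
    by (rule not_flipper_wins_from_if_invariant[where P = "\<lambda>H v. heavy k H v \<or> forces_heavy k H v", rotated])
      (rule runner_step_radius1[OF big])
  with assms v(1) show False
    unfolding flipper_wins_def by blast
qed

end

lemma card_shattered_le_fw:
  assumes "finite_graph V E" "shattered V E X"
  shows "card X \<le> 8 * fw 1 V E"
proof -
  interpret shattered_set V E X
    by unfold_locales (use assms in auto)
  show ?thesis
    using card_le_if_flipper_wins flipper_wins_fw[OF assms(1)] by blast
qed

lemma Sup_nat_least: "(\<And>y. y \<in> S \<Longrightarrow> y \<le> (b::nat)) \<Longrightarrow> Sup S \<le> b"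
  by (cases "S = {}") (auto intro: cSup_least)

theorem mainTheorem6:
  fixes V :: "'a set" and E :: "'a \<Rightarrow> 'a \<Rightarrow> bool"
  assumes "finite_graph V E"
  shows "VCdim V E \<le> 8 * fw 1 V E \<and> twoVCdim V E \<le> 8 * fw 2 V E + 2"
proof
  show "VCdim V E \<le> 8 * fw 1 V E"
    unfolding VCdim_def using card_shattered_le_fw[OF assms] by (auto intro: Sup_nat_least)
  have "twoVCdim V E \<le> 4 * fw 2 V E"
    unfolding twoVCdim_def using card_two_shattered_le_fw[OF assms] by (auto intro: Sup_nat_least)
  then show "twoVCdim V E \<le> 8 * fw 2 V E + 2"
    by simp
qed

end
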